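(* Let $(X,d)$ be a compact doubling metric space with $\operatorname{diam}(X,d)=1/2$ and $\mathcal S$ a hyperbolic filling with parameters $a\ge\lambda\ge6$. Let $\rho:\mathcal S\to(0,\infty)$ satisfy (H1) and (H4) (with exponent $p$), and let $C\ge\eta_-^{-p}$. Let $k\ge0$ and let $\mu_k$ be a $(C,\pi)$-balanced probability mass function on $\mathcal S_k$. Then there exists a probability mass function $\mu_{k+1}$ on $\mathcal S_{k+1}$ such that: (1) the pair $(\mu_k,\mu_{k+1})$ is $(C,\pi)$-compatible; (2) $\mu_{k+1}$ is $(C,\pi)$-balanced; (3) there is a probability measure $\mu_{k,k+1}$ on $X\times X$ whose marginals (pushforwards under the two coordinate projections) are $\tilde\mu_k=\sum_{u\in\mathcal S_k}\mu_k(u)\delta_{\pi_1(u)}$ and $\tilde\mu_{k+1}=\sum_{v\in\mathcal S_{k+1}}\mu_{k+1}(v)\delta_{\pi_1(v)}$, and such that $\mu_{k,k+1}(\{(x_1,x_2)\in X\times X:d(x_1,x_2)\ge(1+2\lambda a^{-1})a^{-k}\})=0$.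
   Context: Hyperbolic filling: $X_0\subset X_1\subset\cdots$ increasing, $X_n$ maximal $a^{-n}$-separated in $X$ ($X_0=\{x_0\}$); $\mathcal S_n=\{(x,n):x\in X_n\}$, $\mathcal S=\bigcup_n\mathcal S_n$, $\pi_1(x,n)=x$, $v_0=(x_0,0)$. Each $(x,n)$, $n\ge1$, has a fixed parent $(y,n-1)$ with $d(x,y)=\min_{z\in X_{n-1}}d(x,z)$; descendants iterate the child relation; $\mathcal D_n(v)$ = descendants of $v$ in $\mathcal S_n$; genealogy $g(v)=(v_0,\dots,v_k=v)$ with $v_i$ parent of $v_{i+1}$. $D_2$: graph distance for the graph with edges vertex–parent and horizontal edges between distinct $(x,n),(y,n)$ with $B(x,\lambda a^{-n})\cap B(y,\lambda a^{-n})\ne\emptyset$. $\delta_x$ is the Dirac mass at $x$. $\pi(v)=\prod_{w\in g(v)}\rho(w)$. (H1) $0<\eta_-\le\rho\le\eta_+<1$. (H4) $\sum_{w\in\mathcal D_n(v)}\pi(w)^p\le\pi(v)^p$ for all $v\in\mathcal S_m$, $n>m$. A function $f:\mathcal S_k\to(0,\infty)$ is $(C,\pi)$-balanced if $f(u)/\pi(u)^p\le C^2f(v)/\pi(v)^p$ for all $u,v\in\mathcal S_k$ with $D_2(u,v)=1$. A pair $f_0:\mathcal S_k\to(0,\infty)$, $f_1:\mathcal S_{k+1}\to(0,\infty)$ is $(C,\pi)$-compatible if $f_0(u)/\pi(u)^p\le f_1(v)/\pi(v)^p\le Cf_0(u)/\pi(u)^p$ whenever $u\in\mathcal S_k$ is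 the parent of $v\in\mathcal S_{k+1}$. *)

theory Defs
  imports "HOL-Analysis.Analysis" "HOL-Probability.Probability"
begin

text \<open>The metric space X is the whole (compact) type 'a.  Vertices of the
hyperbolic filling are pairs (x, n) with x in Xs n.  The fixed parent of
(x, n), n >= 1, is (par x n, n - 1).\<close>

definition doubling :: "'a::metric_space itself \<Rightarrow> bool" where
  "doubling _ \<longleftrightarrow> (\<exists>N::nat. \<forall>(x::'a) r. r > 0 \<longrightarrow>
      (\<exists>F. finite F \<and> card F \<le> N \<and> ball x r \<subseteq> (\<Union>y\<in>F. ball y (r/2))))"

definition separated :: "real \<Rightarrow> 'a::metric_space set \<Rightarrow> bool" where
  "separated r A \<longleftrightarrow> (\<forall>x\<in>A. \<forall>y\<in>A. x \<noteq> y \<longrightarrow> dist x y \<ge> r)"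

definition maximal_separated :: "real \<Rightarrow> 'a::metric_space set \<Rightarrow> bool" where
  "maximal_separated r A \<longleftrightarrow> separated r A \<and>
      (\<forall>z. z \<notin> A \<longrightarrow> \<not> separated r (insert z A))"

definition hyp_filling ::
  "real \<Rightarrow> real \<Rightarrow> (nat \<Rightarrow> 'a::metric_space set) \<Rightarrow> 'a \<Rightarrow> ('a \<Rightarrow> nat \<Rightarrow> 'a) \<Rightarrow> bool" where
  "hyp_filling a lam Xs x0 par \<longleftrightarrow>
     Xs 0 = {x0} \<and> (\<forall>n. Xs n \<subseteq> Xs (Suc n)) \<and>
     (\<forall>n. maximal_separated (a powr (- real n)) (Xs n)) \<and>
     (\<forall>n x. n \<ge> 1 \<longrightarrow> x \<in> Xs n \<longrightarrow>
        par x n \<in> Xs (n - 1) \<and> (\<forall>z\<in>Xs (n - 1). dist x (par x n) \<le> dist x z))"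

definition Sv :: "(nat \<Rightarrow> 'a set) \<Rightarrow> nat \<Rightarrow> ('a \<times> nat) set" where
  "Sv Xs n = (\<lambda>x. (x, n)) ` Xs n"

definition Sall :: "(nat \<Rightarrow> 'a set) \<Rightarrow> ('a \<times> nat) set" where
  "Sall Xs = (\<Union>n. Sv Xs n)"

text \<open>anc par x n m: the first component of the ancestor at level m of (x, n), for m \<le> n.\<close>
primrec anc :: "('a \<Rightarrow> nat \<Rightarrow> 'a) \<Rightarrow> 'a \<Rightarrow> nat \<Rightarrow> nat \<Rightarrow> 'a" where
  "anc par x 0 m = x"
| "anc par x (Suc n) m = (if Suc n \<le> m then x else anc par (par x (Suc n)) n m)"

definition Desc :: "(nat \<Rightarrow> 'a set) \<Rightarrow> ('a \<Rightarrow> nat \<Rightarrow> 'a) \<Rightarrow> nat \<Rightarrow> 'a \<times> nat \<Rightarrow> ('a \<times> nat) set" where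
  "Desc Xs par n v = {w \<in> Sv Xs n. snd v < n \<and> anc par (fst w) n (snd v) = fst v}"

primrec pw :: "('a \<times> nat \<Rightarrow> real) \<Rightarrow> ('a \<Rightarrow> nat \<Rightarrow> 'a) \<Rightarrow> nat \<Rightarrow> 'a \<Rightarrow> real" where
  "pw rho par 0 x = rho (x, 0)"
| "pw rho par (Suc n) x = rho (x, Suc n) * pw rho par n (par x (Suc n))"

definition piv :: "('a \<times> nat \<Rightarrow> real) \<Rightarrow> ('a \<Rightarrow> nat \<Rightarrow> 'a) \<Rightarrow> 'a \<times> nat \<Rightarrow> real" where
  "piv rho par v = pw rho par (snd v) (fst v)"

definition is_parent :: "(nat \<Rightarrow> 'a set) \<Rightarrow> ('a \<Rightarrow> nat \<Rightarrow> 'a) \<Rightarrow> 'a \<times> nat \<Rightarrow> 'a \<times> nat \<Rightarrow> bool" where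
  "is_parent Xs par u v \<longleftrightarrow> v \<in> Sall Xs \<and> snd v \<ge> 1 \<and> u = (par (fst v) (snd v), snd v - 1)"

text \<open>Edges of the graph defining D_2: vertex--parent edges and horizontal edges.\<close>
definition fill_edge :: "real \<Rightarrow> real \<Rightarrow> (nat \<Rightarrow> 'a::metric_space set) \<Rightarrow> ('a \<Rightarrow> nat \<Rightarrow> 'a)
    \<Rightarrow> 'a \<times> nat \<Rightarrow> 'a \<times> nat \<Rightarrow> bool" where
  "fill_edge a lam Xs par u v \<longleftrightarrow>
     is_parent Xs par u v \<or> is_parent Xs par v u \<or>
     (u \<in> Sall Xs \<and> v \<in> Sall Xs \<and> snd u = snd v \<and> u \<noteq> v \<and>
      ball (fst u) (lam * a powr (- real (snd u))) \<inter> ball (fst v) (lam * a powr (- real (snd v))) \<noteq> {})"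

definition D2_one :: "real \<Rightarrow> real \<Rightarrow> (nat \<Rightarrow> 'a::metric_space set) \<Rightarrow> ('a \<Rightarrow> nat \<Rightarrow> 'a)
    \<Rightarrow> 'a \<times> nat \<Rightarrow> 'a \<times> nat \<Rightarrow> bool" where
  "D2_one a lam Xs par u v \<longleftrightarrow> u \<noteq> v \<and> fill_edge a lam Xs par u v"

definition balanced :: "real \<Rightarrow> real \<Rightarrow> (nat \<Rightarrow> 'a::metric_space set) \<Rightarrow> ('a \<Rightarrow> nat \<Rightarrow> 'a)
    \<Rightarrow> ('a \<times> nat \<Rightarrow> real) \<Rightarrow> real \<Rightarrow> real \<Rightarrow> nat \<Rightarrow> ('a \<times> nat \<Rightarrow> real) \<Rightarrow> bool" where
  "balanced a lam Xs par rho p C k f \<longleftrightarrow>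
     (\<forall>u\<in>Sv Xs k. f u > 0) \<and>
     (\<forall>u\<in>Sv Xs k. \<forall>v\<in>Sv Xs k. D2_one a lam Xs par u v \<longrightarrow>
        f u / piv rho par u powr p \<le> C\<^sup>2 * f v / piv rho par v powr p)"

definition compatible :: "(nat \<Rightarrow> 'a set) \<Rightarrow> ('a \<Rightarrow> nat \<Rightarrow> 'a)
    \<Rightarrow> ('a \<times> nat \<Rightarrow> real) \<Rightarrow> real \<Rightarrow> real \<Rightarrow> nat \<Rightarrow> ('a \<times> nat \<Rightarrow> real) \<Rightarrow> ('a \<times> nat \<Rightarrow> real) \<Rightarrow> bool" where
  "compatible Xs par rho p C k f0 f1 \<longleftrightarrow>
     (\<forall>u\<in>Sv Xs k. \<forall>v\<in>Sv Xs (Suc k). is_parent Xs par u v \<longrightarrow>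
        f0 u / piv rho par u powr p \<le> f1 v / piv rho par v powr p \<and>
        f1 v / piv rho par v powr p \<le> C * f0 u / piv rho par u powr p)"

definition pmf_on :: "('b \<Rightarrow> real) \<Rightarrow> 'b set \<Rightarrow> bool" where
  "pmf_on f A \<longleftrightarrow> finite A \<and> (\<forall>u\<in>A. f u \<ge> 0) \<and> (\<Sum>u\<in>A. f u) = 1"

end

theory Submission
  imports Defs
begin

(* Let F = mu_k / pi^p be the density of mu_k and S(u) the sum of pi^p over the children of u.
   By (H4) S(u) <= pi(u)^p, and since u has a child at the same point, whose rho is at least
   eta_-, also pi(u)^p <= C S(u).  Splitting the mass of u among its children in proportion to
   pi^p therefore gives them densities between F(u) and C F(u), which is compatibility.
   Balance can only fail between children of adjacent parents u, u' with F(u) > C F(u').  The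
   mass F(u) (pi(u)^p - S(u)) that u holds in excess of density F(u) on its children is sent to
   such neighbours instead, which may grow up to density C F(u'); balance at level k prevents
   a parent from both sending and receiving.  A greedy flow ships, for every u, either all of
   its excess or enough to fill all its receivers, and in both cases the new densities are
   (C, pi)-balanced.  Mass only moves along a parent edge or a parent edge followed by one
   horizontal edge, which gives the coupling and the distance bound. *)

section \<open>Saturating flows and discrete couplings\<close>

lemma saturating_flow_exists:
  fixes U :: "'u set" and A :: "'u \<Rightarrow> 'v set" and D :: "'u \<Rightarrow> real" and cap :: "'v \<Rightarrow> real"
  assumes "finite U" and "\<And>u. u \<in> U \<Longrightarrow> finite (A u)" and "\<And>u. u \<in> U \<Longrightarrow> 0 \<le> D u"
    and cap_nonneg: "\<And>v. 0 \<le> cap v"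
  shows "\<exists>E. (\<forall>u\<in>U. \<forall>v. 0 \<le> E u v \<and> (v \<notin> A u \<longrightarrow> E u v = 0)) \<and>
    (\<forall>v. (\<Sum>u\<in>U. E u v) \<le> cap v) \<and>
    (\<forall>u\<in>U. (\<Sum>v\<in>A u. E u v) \<le> D u \<and>
       ((\<Sum>v\<in>A u. E u v) = D u \<or> (\<forall>v\<in>A u. (\<Sum>w\<in>U. E w v) = cap v)))"
  using assms(1-3)
proof (induction U rule: finite_induct)
  case empty
  show ?case using cap_nonneg by (intro exI[of _ "\<lambda>_ _. 0"]) auto
next
  case (insert u U)
  then obtain E where E_nonneg: "\<forall>w\<in>U. \<forall>v. 0 \<le> E w v \<and> (v \<notin> A w \<longrightarrow> E w v = 0)"
    and E_le: "\<forall>v. (\<Sum>w\<in>U. E w v) \<le> cap v"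
    and E_sat: "\<forall>w\<in>U. (\<Sum>v\<in>A w. E w v) \<le> D w \<and>
       ((\<Sum>v\<in>A w. E w v) = D w \<or> (\<forall>v\<in>A w. (\<Sum>w'\<in>U. E w' v) = cap v))"
    by auto
  define res where "res v = cap v - (\<Sum>w\<in>U. E w v)" for v
  define s where "s = (\<Sum>v\<in>A u. res v)"
  \<comment> \<open>\<open>u\<close> fills the residual capacities on \<open>A u\<close> proportionally, as far as \<open>D u\<close> allows\<close>
  define \<theta> where "\<theta> = (if s \<le> D u then 1 else D u / s)"
  define E' where "E' = E(u := (\<lambda>v. if v \<in> A u then \<theta> * res v else 0))"
  have D_u: "0 \<le> D u" and res_nonneg: "0 \<le> res v" for v
    using insert E_le unfolding res_def by auto
  have s_nonneg: "0 \<le> s" unfolding s_def using res_nonneg by (simp add: sum_nonneg)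
  have \<theta>_bounds: "0 \<le> \<theta>" "\<theta> \<le> 1" "\<theta> * s \<le> D u" "\<theta> * s = D u \<or> \<theta> = 1"
    unfolding \<theta>_def using D_u s_nonneg by auto
  have "(\<Sum>w\<in>U. E' w v) = (\<Sum>w\<in>U. E w v)" for v
    using insert.hyps(2) unfolding E'_def by (intro sum.cong) auto
  then have inflow': "(\<Sum>w\<in>insert u U. E' w v) = E' u v + (\<Sum>w\<in>U. E w v)" for v
    using insert.hyps by simp
  have outflow_u: "(\<Sum>v\<in>A u. E' u v) = \<theta> * s"
    unfolding E'_def s_def by (simp add: sum_distrib_left)
  have E'_u_le: "E' u v \<le> res v" for v
    unfolding E'_def using \<theta>_bounds res_nonneg by (auto intro: mult_left_le_one_le)
  have "\<forall>w\<in>insert u U. \<forall>v. 0 \<le> E' w v \<and> (v \<notin> A w \<longrightarrow> E' w v = 0)"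
    using E_nonneg \<theta>_bounds res_nonneg unfolding E'_def by auto
  moreover have "\<forall>v. (\<Sum>w\<in>insert u U. E' w v) \<le> cap v"
    using inflow' E'_u_le unfolding res_def by (simp add: add.commute le_diff_eq)
  moreover have "\<forall>w\<in>insert u U. (\<Sum>v\<in>A w. E' w v) \<le> D w \<and>
      ((\<Sum>v\<in>A w. E' w v) = D w \<or> (\<forall>v\<in>A w. (\<Sum>w'\<in>insert u U. E' w' v) = cap v))"
  proof
    fix w assume w: "w \<in> insert u U"
    show "(\<Sum>v\<in>A w. E' w v) \<le> D w \<and>
      ((\<Sum>v\<in>A w. E' w v) = D w \<or> (\<forall>v\<in>A w. (\<Sum>w'\<in>insert u U. E' w' v) = cap v))"
    proof (cases "w = u")
      case True
      have "(\<Sum>w'\<in>insert u U. E' w' v) = cap v" if "\<theta> = 1" "v \<in> A u" for v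
        using that inflow'[of v] unfolding E'_def res_def by simp
      then show ?thesis using True outflow_u \<theta>_bounds by auto
    next
      case False
      then have "w \<in> U" "(\<Sum>v\<in>A w. E' w v) = (\<Sum>v\<in>A w. E w v)"
        using w unfolding E'_def by auto
      moreover have "(\<Sum>w'\<in>insert u U. E' w' v) = cap v" if "(\<Sum>w'\<in>U. E w' v) = cap v" for v
        using that inflow'[of v] unfolding E'_def res_def by simp
      ultimately show ?thesis using E_sat by metis
    qed
  qed
  ultimately show ?case by (intro exI[of _ E'] conjI)
qed

definition transport_plan ::
    "'u set \<Rightarrow> 'v set \<Rightarrow> ('u \<Rightarrow> 'v \<Rightarrow> real) \<Rightarrow> ('u \<Rightarrow> real) \<Rightarrow> ('v \<Rightarrow> real) \<Rightarrow> bool"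
  where "transport_plan U V T mu nu \<longleftrightarrow> (\<forall>u\<in>U. \<forall>v\<in>V. 0 \<le> T u v) \<and>
    (\<forall>u\<in>U. (\<Sum>v\<in>V. T u v) = mu u) \<and> (\<forall>v\<in>V. (\<Sum>u\<in>U. T u v) = nu v)"

lemma transport_plan_pmf_on:
  assumes "finite V" "transport_plan U V T mu nu" "pmf_on mu U"
  shows "pmf_on nu V"
proof -
  have "(\<Sum>v\<in>V. nu v) = (\<Sum>v\<in>V. \<Sum>u\<in>U. T u v)"
    using assms(2) by (simp add: transport_plan_def)
  also have "\<dots> = (\<Sum>u\<in>U. mu u)"
    using assms(2) by (subst sum.swap) (simp add: transport_plan_def)
  moreover have "0 \<le> nu v" if "v \<in> V" for v
  proof -
    have "nu v = (\<Sum>u\<in>U. T u v)" and "\<forall>u\<in>U. 0 \<le> T u v"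
      using assms(2) that by (simp_all add: transport_plan_def)
    then show ?thesis by (simp add: sum_nonneg)
  qed
  ultimately show ?thesis
    using assms(1,3) by (simp add: pmf_on_def)
qed

lemma finite_coupling_exists:
  fixes T :: "'u \<Rightarrow> 'v \<Rightarrow> real" and f :: "'u \<Rightarrow> 'a::topological_space"
    and g :: "'v \<Rightarrow> 'b::topological_space"
  assumes finite: "finite U" "finite V" and plan: "transport_plan U V T mu nu"
    and total: "(\<Sum>u\<in>U. mu u) = 1"
    and B: "B \<in> sets borel" and avoids_B: "\<And>u v. u \<in> U \<Longrightarrow> v \<in> V \<Longrightarrow> (f u, g v) \<in> B \<Longrightarrow> T u v = 0"
  shows "\<exists>M. prob_space M \<and> sets M = sets borel \<and>
    (\<forall>A\<in>sets borel. measure M (fst -` A \<inter> space M) = (\<Sum>u\<in>U. mu u * indicator A (f u))) \<and>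
    (\<forall>A\<in>sets borel. measure M (snd -` A \<inter> space M) = (\<Sum>v\<in>V. nu v * indicator A (g v))) \<and>
    measure M B = 0"
proof (intro exI conjI ballI)
  have T_nonneg: "\<And>u v. u \<in> U \<Longrightarrow> v \<in> V \<Longrightarrow> 0 \<le> T u v"
    and rows: "\<And>u. u \<in> U \<Longrightarrow> (\<Sum>v\<in>V. T u v) = mu u"
    and cols: "\<And>v. v \<in> V \<Longrightarrow> (\<Sum>u\<in>U. T u v) = nu v"
    using plan by (simp_all add: transport_plan_def)
  define h where "h z = (f (fst z), g (snd z))" for z
  define M where "M = distr (point_measure (U \<times> V) (\<lambda>z. T (fst z) (snd z))) borel h"
  have point_measure: "measure (point_measure (U \<times> V) (\<lambda>z. T (fst z) (snd z))) X
      = (\<Sum>z\<in>X. T (fst z) (snd z))" if "X \<subseteq> U \<times> V" for X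
    using that finite T_nonneg by (subst measure_point_measure_finite_if) auto
  have measure_M: "measure M X = (\<Sum>u\<in>U. \<Sum>v\<in>V. T u v * indicator X (f u, g v))"
    if "X \<in> sets borel" for X
  proof -
    have "measure M X = (\<Sum>z\<in>h -` X \<inter> (U \<times> V). T (fst z) (snd z))"
      unfolding M_def using that by (simp add: measure_distr space_point_measure point_measure)
    also have "\<dots> = (\<Sum>z\<in>U \<times> V. T (fst z) (snd z) * indicator X (h z))"
      using finite by (simp add: Int_commute[of "h -` X"] sum.inter_restrict indicator_def)
    finally show ?thesis
      unfolding h_def by (simp add: sum.cartesian_product case_prod_beta)
  qed
  have space_M: "space M = UNIV" unfolding M_def by simp
  show "sets M = sets borel" unfolding M_def by simp
  have "emeasure M (space M) = (\<Sum>z\<in>U \<times> V. ennreal (T (fst z) (snd z)))"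
    unfolding M_def using finite
    by (simp add: emeasure_distr space_point_measure emeasure_point_measure_finite)
  also have "\<dots> = ennreal (\<Sum>u\<in>U. \<Sum>v\<in>V. T u v)"
    using T_nonneg by (subst sum_ennreal) (auto simp: sum.cartesian_product case_prod_beta)
  also have "\<dots> = 1"
    using rows total by simp
  finally show "prob_space M" by (rule prob_spaceI)
  show "measure M (fst -` A \<inter> space M) = (\<Sum>u\<in>U. mu u * indicator A (f u))"
    if "A \<in> sets borel" for A
  proof -
    have "fst -` A \<in> sets (borel :: ('a \<times> 'b) measure)"
      using that by (intro measurable_sets_borel[OF borel_measurable_continuous_onI]) (auto intro: continuous_intros)
    then show ?thesis
      using measure_M rows by (simp add: space_M indicator_def flip: sum_distrib_right)
  qed
  show "measure M (snd -` A \<inter> space M) = (\<Sum>v\<in>V. nu v * indicator A (g v))"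
    if "A \<in> sets borel" for A
  proof -
    have "snd -` A \<in> sets (borel :: ('a \<times> 'b) measure)"
      using that by (intro measurable_sets_borel[OF borel_measurable_continuous_onI]) (auto intro: continuous_intros)
    then have "measure M (snd -` A \<inter> space M) = (\<Sum>u\<in>U. \<Sum>v\<in>V. T u v * indicator A (g v))"
      using measure_M by (simp add: space_M indicator_def)
    also have "\<dots> = (\<Sum>v\<in>V. (\<Sum>u\<in>U. T u v) * indicator A (g v))"
      by (subst sum.swap) (simp add: sum_distrib_right)
    finally show ?thesis using cols by simp
  qed
  show "measure M B = 0"
    using measure_M[OF B] avoids_B by (auto intro!: sum.neutral simp: indicator_def)
qed

section \<open>Refining a balanced mass distribution\<close>

text \<open>Two consecutive levels of the filling in the abstract: \<open>U\<close> and \<open>V\<close> stand for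
  \<open>S\<^sub>k\<close> and \<open>S\<^sub>k\<^sub>+\<^sub>1\<close>, \<open>pa\<close> for the parent map, \<open>P\<close> for \<open>\<pi>\<^sup>p\<close>, \<open>adj\<close> for
  \<open>D\<^sub>2\<close>-adjacency and \<open>pos\<close> for \<open>\<pi>\<^sub>1\<close>; the last assumption is the balance of \<open>mu\<close> at
  scale \<open>r\<close>.\<close>
locale mass_refinement =
  fixes U V :: "'v set" and pa :: "'v \<Rightarrow> 'v" and P mu :: "'v \<Rightarrow> real" and C r :: real
    and adj :: "'v \<Rightarrow> 'v \<Rightarrow> bool" and pos :: "'v \<Rightarrow> 'a::metric_space"
  assumes finite_U: "finite U" and finite_V: "finite V"
    and pa_in_U: "v \<in> V \<Longrightarrow> pa v \<in> U"
    and P_pos_U: "u \<in> U \<Longrightarrow> 0 < P u" and P_pos_V: "v \<in> V \<Longrightarrow> 0 < P v"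
    and mu_pos: "u \<in> U \<Longrightarrow> 0 < mu u"
    and children_weight_le: "u \<in> U \<Longrightarrow> (\<Sum>v | v \<in> V \<and> pa v = u. P v) \<le> P u"
    and weight_le_children: "u \<in> U \<Longrightarrow> P u \<le> C * (\<Sum>v | v \<in> V \<and> pa v = u. P v)"
    and adj_parents_near: "v \<in> V \<Longrightarrow> v' \<in> V \<Longrightarrow> adj v v' \<Longrightarrow> dist (pos (pa v)) (pos (pa v')) < r"
    and mu_balanced_near: "u \<in> U \<Longrightarrow> u' \<in> U \<Longrightarrow> u \<noteq> u' \<Longrightarrow>
      dist (pos u) z < r \<Longrightarrow> dist (pos u') z < r \<Longrightarrow> mu u / P u \<le> C\<^sup>2 * mu u' / P u'"
begin

definition children :: "'v \<Rightarrow> 'v set" where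
  "children u = {v \<in> V. pa v = u}"

definition child_weight :: "'v \<Rightarrow> real" where
  "child_weight u = sum P (children u)"

definition density :: "'v \<Rightarrow> real" where
  "density u = mu u / P u"

lemma mem_children_iff [simp]: "v \<in> children u \<longleftrightarrow> v \<in> V \<and> pa v = u"
  by (simp add: children_def)

lemma children_subset: "children u \<subseteq> V"
  by auto

lemma child_weight_le: "u \<in> U \<Longrightarrow> child_weight u \<le> P u"
  using children_weight_le by (simp add: child_weight_def children_def)

lemma weight_le_child_weight: "u \<in> U \<Longrightarrow> P u \<le> C * child_weight u"
  using weight_le_children by (simp add: child_weight_def children_def)

lemma child_weight_pos:
  assumes "u \<in> U" shows "0 < child_weight u"
proof -
  have "0 \<le> child_weight u"
    unfolding child_weight_def by (intro sum_nonneg) (auto intro: less_imp_le P_pos_V)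
  moreover have "child_weight u \<noteq> 0"
    using weight_le_child_weight[OF assms] P_pos_U[OF assms] by auto
  ultimately show ?thesis by simp
qed

lemma one_le_C: "u \<in> U \<Longrightarrow> 1 \<le> C"
  using weight_le_child_weight child_weight_le child_weight_pos
  by (smt (verit) mult_le_cancel_right1)

lemma weight_ratio_bounds:
  assumes "u \<in> U" shows "1 \<le> P u / child_weight u" and "P u / child_weight u \<le> C"
  using child_weight_le[OF assms] weight_le_child_weight[OF assms] child_weight_pos[OF assms]
  by (simp_all add: field_simps)

lemma density_pos: "u \<in> U \<Longrightarrow> 0 < density u"
  by (simp add: density_def mu_pos P_pos_U)

lemma mu_eq_density: "u \<in> U \<Longrightarrow> mu u = density u * P u"
  using P_pos_U[of u] by (simp add: density_def)

lemma density_near: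
  assumes "u \<in> U" "u' \<in> U" "dist (pos u) z < r" "dist (pos u') z < r"
  shows "density u \<le> C\<^sup>2 * density u'"
proof (cases "u = u'")
  case True
  have "1 \<le> C\<^sup>2" using one_le_C[OF assms(1)] by (simp add: one_le_power)
  then show ?thesis using True density_pos[OF assms(1)] by simp
next
  case False
  then show ?thesis using mu_balanced_near[OF assms(1,2) False assms(3,4)] by (simp add: density_def)
qed

lemma density_parent_adj:
  assumes "v \<in> V" "v' \<in> V" "adj v v'"
  shows "density (pa v) \<le> C\<^sup>2 * density (pa v')"
proof -
  have "dist (pos (pa v)) (pos (pa v')) < r" by (rule adj_parents_near[OF assms])
  moreover from this have "dist (pos (pa v')) (pos (pa v')) < r"
    using order_le_less_trans[OF zero_le_dist] by simp
  ultimately show ?thesis using pa_in_U assms(1,2) by (intro density_near) auto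
qed

text \<open>Where \<open>u\<close> sends the mass it cannot keep on its own children.\<close>
definition receivers :: "'v \<Rightarrow> 'v set" where
  "receivers u = {v' \<in> V. \<exists>v\<in>children u. adj v v' \<and> C * density (pa v') < density u}"

lemma finite_receivers: "finite (receivers u)"
  using finite_V by (simp add: receivers_def)

lemma receivers_subset: "receivers u \<subseteq> V"
  by (auto simp: receivers_def)

lemma receivers_of_receiver_parent:
  assumes u: "u \<in> U" and v': "v' \<in> receivers u"
  shows "receivers (pa v') = {}"
proof (rule ccontr)
  assume "receivers (pa v') \<noteq> {}"
  then obtain w x' where w: "w \<in> V" "pa w = pa v'" and x': "x' \<in> V" "adj w x'"
    and light: "C * density (pa x') < density (pa v')"
    unfolding receivers_def by auto
  obtain v where v: "v \<in> V" "pa v = u" "adj v v'" and heavy: "C * density (pa v') < density u"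
    using v' unfolding receivers_def by auto
  have "v' \<in> V" using v' receivers_subset by auto
  have "density u \<le> C\<^sup>2 * density (pa x')"
    using adj_parents_near[OF v(1) \<open>v' \<in> V\<close> v(3)] adj_parents_near[OF w(1) x']
    by (intro density_near[OF u pa_in_U[OF x'(1)], where z = "pos (pa v')"])
      (auto simp: v(2) w(2) dist_commute)
  also have "\<dots> < C * density (pa v')"
    using light one_le_C[OF u] by (simp add: power2_eq_square)
  finally show False using heavy by simp
qed

definition excess :: "'v \<Rightarrow> real" where
  "excess u = density u * (P u - child_weight u)"

text \<open>A child of a vertex without receivers may grow up to \<open>C\<close> times the density of its
  parent; its capacity is the room left above its proportional share.\<close>
definition capacity :: "'v \<Rightarrow> real" where
  "capacity v = (if v \<in> V \<and> receivers (pa v) = {}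
     then density (pa v) * P v * (C - P (pa v) / child_weight (pa v)) else 0)"

lemma excess_nonneg: "u \<in> U \<Longrightarrow> 0 \<le> excess u"
  unfolding excess_def using density_pos[of u] child_weight_le[of u] by simp

lemma capacity_nonneg: "0 \<le> capacity v"
proof (cases "v \<in> V")
  case True
  have "0 \<le> density (pa v) * P v" "0 \<le> C - P (pa v) / child_weight (pa v)"
    using density_pos[OF pa_in_U[OF True]] P_pos_V[OF True] weight_ratio_bounds(2)[OF pa_in_U[OF True]]
    by simp_all
  then show ?thesis by (simp add: capacity_def)
qed (simp add: capacity_def)

end

locale mass_refinement_flow = mass_refinement U V pa P mu C r adj pos
  for U V :: "'v set" and pa P mu C r adj and pos :: "'v \<Rightarrow> 'a::metric_space" +
  fixes E :: "'v \<Rightarrow> 'v \<Rightarrow> real"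
  assumes flow_nonneg: "u \<in> U \<Longrightarrow> 0 \<le> E u v"
    and flow_to_receivers: "u \<in> U \<Longrightarrow> v \<notin> receivers u \<Longrightarrow> E u v = 0"
    and inflow_le_capacity: "(\<Sum>u\<in>U. E u v) \<le> capacity v"
    and outflow_le_excess: "u \<in> U \<Longrightarrow> (\<Sum>v\<in>receivers u. E u v) \<le> excess u"
    and outflow_saturates: "u \<in> U \<Longrightarrow>
      (\<Sum>v\<in>receivers u. E u v) = excess u \<or> (\<forall>v\<in>receivers u. (\<Sum>w\<in>U. E w v) = capacity v)"
begin

definition inflow :: "'v \<Rightarrow> real" where
  "inflow v = (\<Sum>u\<in>U. E u v)"

definition retained :: "'v \<Rightarrow> real" where
  "retained u = mu u - (\<Sum>v\<in>receivers u. E u v)"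

definition plan :: "'v \<Rightarrow> 'v \<Rightarrow> real" where
  "plan u v = (if v \<in> children u then P v / child_weight u * retained u else 0) + E u v"

definition refined :: "'v \<Rightarrow> real" where
  "refined v = (\<Sum>u\<in>U. plan u v)"

lemma inflow_nonneg: "0 \<le> inflow v"
  unfolding inflow_def using flow_nonneg by (simp add: sum_nonneg)

lemma inflow_eq_0: "v \<in> V \<Longrightarrow> receivers (pa v) \<noteq> {} \<Longrightarrow> inflow v = 0"
  using inflow_le_capacity[of v] inflow_nonneg[of v] by (simp add: inflow_def capacity_def)

lemma retained_bounds:
  assumes u: "u \<in> U"
  shows "density u * child_weight u \<le> retained u" and "retained u \<le> mu u"
proof -
  have "0 \<le> (\<Sum>v\<in>receivers u. E u v)" using flow_nonneg[OF u] by (simp add: sum_nonneg)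
  then show "retained u \<le> mu u" by (simp add: retained_def)
  show "density u * child_weight u \<le> retained u"
    using outflow_le_excess[OF u] mu_eq_density[OF u] by (simp add: retained_def excess_def algebra_simps)
qed

lemma retained_pos: "u \<in> U \<Longrightarrow> 0 < retained u"
  using retained_bounds(1) density_pos child_weight_pos by (smt (verit) mult_pos_pos)

lemma plan_nonneg: "u \<in> U \<Longrightarrow> 0 \<le> plan u v"
  unfolding plan_def using flow_nonneg retained_pos child_weight_pos P_pos_V
  by (simp add: less_imp_le)

lemma plan_row_sum:
  assumes u: "u \<in> U" shows "(\<Sum>v\<in>V. plan u v) = mu u"
proof -
  have "(\<Sum>v\<in>V. if v \<in> children u then P v / child_weight u * retained u else 0)
      = (\<Sum>v\<in>children u. P v / child_weight u * retained u)"
    unfolding sum.inter_restrict[OF finite_V, symmetric] Int_absorb1[OF children_subset] ..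
  also have "\<dots> = retained u"
    using child_weight_pos[OF u] by (simp add: child_weight_def flip: sum_distrib_right sum_divide_distrib)
  finally have own: "(\<Sum>v\<in>V. if v \<in> children u then P v / child_weight u * retained u else 0)
      = retained u" .
  have "(\<Sum>v\<in>V. E u v) = (\<Sum>v\<in>receivers u. E u v)"
    using finite_V receivers_subset flow_to_receivers[OF u] by (intro sum.mono_neutral_right) auto
  then show ?thesis using own by (simp add: plan_def sum.distrib retained_def)
qed

lemma plan_transport: "transport_plan U V plan mu refined"
  using plan_nonneg plan_row_sum by (simp add: transport_plan_def refined_def)

lemma refined_eq:
  assumes v: "v \<in> V"
  shows "refined v = P v / child_weight (pa v) * retained (pa v) + inflow v"
  using v pa_in_U[OF v] finite_U
  by (simp add: refined_def plan_def inflow_def sum.distrib sum.delta' eq_commute[of _ "pa v"])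

lemma refined_density_bounds:
  assumes v: "v \<in> V"
  shows "density (pa v) \<le> refined v / P v" and "refined v / P v \<le> C * density (pa v)"
proof -
  define u where "u = pa v"
  have u: "u \<in> U" unfolding u_def using pa_in_U[OF v] .
  have Pv: "0 < P v" and Su: "0 < child_weight u" using P_pos_V[OF v] child_weight_pos[OF u] .
  have share_lo: "density u \<le> retained u / child_weight u"
    using retained_bounds(1)[OF u] Su by (simp add: field_simps)
  have share_hi: "retained u / child_weight u \<le> density u * (P u / child_weight u)"
    using retained_bounds(2)[OF u] mu_eq_density[OF u] Su by (simp add: field_simps)
  have ratio: "refined v / P v = retained u / child_weight u + inflow v / P v"
    using refined_eq[OF v] Pv by (simp add: u_def field_simps)
  show "density u \<le> refined v / P v"
    using ratio share_lo inflow_nonneg[of v] Pv by (smt (verit) divide_nonneg_pos)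
  show "refined v / P v \<le> C * density u"
  proof (cases "receivers u = {}")
    case True
    have "inflow v / P v \<le> density u * (C - P u / child_weight u)"
      using inflow_le_capacity[of v] v True Pv
      by (simp add: inflow_def capacity_def u_def field_simps)
    moreover have "retained u = mu u" using True by (simp add: retained_def)
    ultimately show ?thesis
      using ratio mu_eq_density[OF u] by (simp add: field_simps)
  next
    case False
    then have "inflow v = 0" using inflow_eq_0[OF v] by (simp add: u_def)
    moreover have "density u * (P u / child_weight u) \<le> density u * C"
      using weight_ratio_bounds(2)[OF u] density_pos[OF u] by (intro mult_left_mono) simp_all
    ultimately show ?thesis using ratio share_hi by (simp add: mult.commute)
  qed
qed

lemma refined_pos: "v \<in> V \<Longrightarrow> 0 < refined v"
  using refined_density_bounds(1) density_pos[OF pa_in_U] P_pos_V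
  by (smt (verit) divide_nonpos_pos)

lemma refined_density_if_shipped:
  assumes v: "v \<in> V" and "receivers (pa v) \<noteq> {}"
    and shipped: "(\<Sum>w\<in>receivers (pa v). E (pa v) w) = excess (pa v)"
  shows "refined v / P v = density (pa v)"
proof -
  have "retained (pa v) = density (pa v) * child_weight (pa v)"
    using shipped mu_eq_density[OF pa_in_U[OF v]] by (simp add: retained_def excess_def algebra_simps)
  then show ?thesis
    using refined_eq[OF v] inflow_eq_0[OF v assms(2)] P_pos_V[OF v] child_weight_pos[OF pa_in_U[OF v]]
    by simp
qed

lemma refined_density_if_filled:
  assumes v: "v \<in> V" and "receivers (pa v) = {}" and filled: "inflow v = capacity v"
  shows "refined v / P v = C * density (pa v)"
proof -
  have "retained (pa v) = density (pa v) * P (pa v)"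
    using assms(2) mu_eq_density[OF pa_in_U[OF v]] by (simp add: retained_def)
  then show ?thesis
    using refined_eq[OF v] filled assms(2) v P_pos_V[OF v] child_weight_pos[OF pa_in_U[OF v]]
    by (simp add: capacity_def field_simps)
qed

lemma refined_balanced:
  assumes v: "v \<in> V" and v': "v' \<in> V" and adj: "adj v v'"
  shows "refined v / P v \<le> C\<^sup>2 * (refined v' / P v')"
proof -
  define u u' where "u = pa v" and "u' = pa v'"
  have u: "u \<in> U" and C: "1 \<le> C" using pa_in_U[OF v] one_le_C by (auto simp: u_def)
  have hi: "refined v / P v \<le> C * density u" and lo': "density u' \<le> refined v' / P v'"
    using refined_density_bounds v v' by (auto simp: u_def u'_def)
  then have lo'': "C\<^sup>2 * density u' \<le> C\<^sup>2 * (refined v' / P v')"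
    by (intro mult_left_mono) simp_all
  show ?thesis
  proof (cases "density u \<le> C * density u'")
    case True
    then have "refined v / P v \<le> C * (C * density u')" using hi C by (smt (verit) mult_left_mono)
    then show ?thesis using lo'' by (simp add: power2_eq_square)
  next
    case False
    then have receiver: "v' \<in> receivers u" using v v' adj by (auto simp: receivers_def u_def u'_def)
    have no_receivers: "receivers u' = {}"
      using receivers_of_receiver_parent[OF u receiver] by (simp add: u'_def)
    consider "(\<Sum>w\<in>receivers u. E u w) = excess u" | "\<forall>w\<in>receivers u. inflow w = capacity w"
      using outflow_saturates[OF u] by (auto simp: inflow_def)
    then show ?thesis
    proof cases
      case 1
      then have "refined v / P v = density u"
        using refined_density_if_shipped[OF v] receiver by (auto simp: u_def)
      also have "\<dots> \<le> C\<^sup>2 * density u'"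
        using density_parent_adj[OF v v' adj] by (simp add: u_def u'_def)
      finally show ?thesis using lo'' by simp
    next
      case 2
      then have "refined v' / P v' = C * density u'"
        using refined_density_if_filled[OF v'] receiver no_receivers by (simp add: u'_def)
      moreover have "C * density u \<le> C * (C\<^sup>2 * density u')"
        using density_parent_adj[OF v v' adj] C by (simp add: u_def u'_def)
      ultimately show ?thesis using hi by (simp add: algebra_simps power2_eq_square)
    qed
  qed
qed

lemma plan_support:
  assumes "u \<in> U" "v \<in> V" "plan u v \<noteq> 0"
  shows "pa v = u \<or> (\<exists>w\<in>V. pa w = u \<and> adj w v)"
  using assms flow_to_receivers[of u v] unfolding plan_def receivers_def children_def
  by (auto split: if_splits)

end

context mass_refinement
begin

lemma refinement_exists:
  obtains nu T where "transport_plan U V T mu nu"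
    "\<And>u v. u \<in> U \<Longrightarrow> v \<in> V \<Longrightarrow> T u v \<noteq> 0 \<Longrightarrow> pa v = u \<or> (\<exists>w\<in>V. pa w = u \<and> adj w v)"
    "\<And>v. v \<in> V \<Longrightarrow> 0 < nu v"
    "\<And>v. v \<in> V \<Longrightarrow> mu (pa v) / P (pa v) \<le> nu v / P v \<and> nu v / P v \<le> C * mu (pa v) / P (pa v)"
    "\<And>v v'. v \<in> V \<Longrightarrow> v' \<in> V \<Longrightarrow> adj v v' \<Longrightarrow> nu v / P v \<le> C\<^sup>2 * nu v' / P v'"
proof -
  obtain E where E: "\<forall>u\<in>U. \<forall>v. 0 \<le> E u v \<and> (v \<notin> receivers u \<longrightarrow> E u v = 0)"
    "\<forall>v. (\<Sum>u\<in>U. E u v) \<le> capacity v"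
    "\<forall>u\<in>U. (\<Sum>v\<in>receivers u. E u v) \<le> excess u \<and> ((\<Sum>v\<in>receivers u. E u v) = excess u \<or>
       (\<forall>v\<in>receivers u. (\<Sum>w\<in>U. E w v) = capacity v))"
    using saturating_flow_exists[of U receivers excess capacity]
      finite_U finite_receivers excess_nonneg capacity_nonneg by blast
  interpret flow: mass_refinement_flow U V pa P mu C r adj pos E
    by unfold_locales (use E in auto)
  show ?thesis
    using that[of flow.plan flow.refined] flow.plan_transport flow.plan_support
      flow.refined_pos flow.refined_density_bounds flow.refined_balanced
    by (simp add: density_def)
qed

end

section \<open>The hyperbolic filling\<close>

definition parent_vertex :: "('a \<Rightarrow> nat \<Rightarrow> 'a) \<Rightarrow> 'a \<times> nat \<Rightarrow> 'a \<times> nat" where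
  "parent_vertex par v = (par (fst v) (snd v), snd v - 1)"

lemma mem_Sv_iff: "v \<in> Sv Xs n \<longleftrightarrow> fst v \<in> Xs n \<and> snd v = n"
  by (cases v) (auto simp: Sv_def)

lemma mem_Sall_iff: "v \<in> Sall Xs \<longleftrightarrow> fst v \<in> Xs (snd v)"
  by (auto simp: Sall_def mem_Sv_iff)

lemma Sv_subset_Sall: "Sv Xs n \<subseteq> Sall Xs"
  by (auto simp: Sall_def)

lemma finite_Sv: "finite (Xs n) \<Longrightarrow> finite (Sv Xs n)"
  by (simp add: Sv_def)

lemma separated_finite:
  fixes A :: "'a::metric_space set"
  assumes "compact (UNIV :: 'a set)" and "separated r A" and "0 < r"
  shows "finite A"
proof (rule ccontr)
  assume "infinite A"
  then obtain x where "x islimpt A"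
    using assms(1) unfolding compact_eq_Bolzano_Weierstrass by blast
  then have ball_infinite: "infinite (A \<inter> ball x (r/2))"
    using assms(3) unfolding islimpt_eq_infinite_ball by auto
  then obtain y where y: "y \<in> A \<inter> ball x (r/2)"
    using infinite_imp_nonempty by blast
  from ball_infinite have "infinite (A \<inter> ball x (r/2) - {y})" by simp
  then obtain z where z: "z \<in> A \<inter> ball x (r/2) - {y}"
    using infinite_imp_nonempty by blast
  have "r \<le> dist y z" using y z assms(2) unfolding separated_def by auto
  moreover have "dist y z < r" using y z dist_triangle_half_r[of x y r z] by (simp add: dist_commute)
  ultimately show False by simp
qed

lemma hyp_filling_finite:
  fixes Xs :: "nat \<Rightarrow> 'a::metric_space set"
  assumes "compact (UNIV :: 'a set)" "hyp_filling a lam Xs x0 par" "0 < a"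
  shows "finite (Xs n)"
proof (rule separated_finite)
  show "separated (a powr - real n) (Xs n)"
    using assms(2) by (simp add: hyp_filling_def maximal_separated_def)
qed (use assms in auto)

lemma hyp_filling_closest_parent:
  assumes "hyp_filling a lam Xs x0 par" "y \<in> Xs (Suc n)"
  shows "par y (Suc n) \<in> Xs n" and "\<And>z. z \<in> Xs n \<Longrightarrow> dist y (par y (Suc n)) \<le> dist y z"
proof -
  have "\<forall>m x. m \<ge> 1 \<longrightarrow> x \<in> Xs m \<longrightarrow>
      par x m \<in> Xs (m - 1) \<and> (\<forall>z\<in>Xs (m - 1). dist x (par x m) \<le> dist x z)"
    using assms(1) unfolding hyp_filling_def by (elim conjE)
  from this[rule_format, of "Suc n" y] assms(2)
  show "par y (Suc n) \<in> Xs n" "\<And>z. z \<in> Xs n \<Longrightarrow> dist y (par y (Suc n)) \<le> dist y z"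
    by auto
qed

lemma hyp_filling_parent_self:
  assumes "hyp_filling a lam Xs x0 par" "x \<in> Xs n"
  shows "x \<in> Xs (Suc n)" and "par x (Suc n) = x"
proof -
  show x: "x \<in> Xs (Suc n)" using assms by (auto simp: hyp_filling_def)
  have "dist x (par x (Suc n)) \<le> dist x x"
    using hyp_filling_closest_parent(2)[OF assms(1) x assms(2)] .
  then show "par x (Suc n) = x" by simp
qed

text \<open>Maximality of the separated set \<open>Xs n\<close> puts every point within \<open>a powr - n\<close> of it.\<close>
lemma hyp_filling_dist_parent:
  assumes filling: "hyp_filling a lam Xs x0 par" and "0 < a" and y: "y \<in> Xs (Suc n)"
  shows "dist y (par y (Suc n)) < a powr - real n"
proof -
  have "\<exists>z\<in>Xs n. dist y z < a powr - real n"
  proof (cases "y \<in> Xs n")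
    case True
    then show ?thesis using \<open>0 < a\<close> by (intro bexI[of _ y]) auto
  next
    case False
    have "separated (a powr - real n) (Xs n)" "\<not> separated (a powr - real n) (insert y (Xs n))"
      using filling False unfolding hyp_filling_def maximal_separated_def by auto
    then show ?thesis unfolding separated_def by (auto simp: dist_commute not_le)
  qed
  then show ?thesis
    using hyp_filling_closest_parent(2)[OF filling y] by fastforce
qed

lemma pw_pos:
  assumes filling: "hyp_filling a lam Xs x0 par" and rho_pos: "\<And>v. v \<in> Sall Xs \<Longrightarrow> 0 < rho v"
  shows "x \<in> Xs n \<Longrightarrow> 0 < pw rho par n x"
proof (induction n arbitrary: x)
  case 0
  then show ?case using rho_pos[of "(x, 0)"] by (simp add: mem_Sall_iff)
next
  case (Suc n)
  then show ?case
    using hyp_filling_closest_parent(1)[OF filling Suc.prems] rho_pos[of "(x, Suc n)"]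
    by (simp add: mem_Sall_iff)
qed

lemma piv_pos:
  assumes "hyp_filling a lam Xs x0 par" "\<And>v. v \<in> Sall Xs \<Longrightarrow> 0 < rho v" "v \<in> Sall Xs"
  shows "0 < piv rho par v"
  using pw_pos[OF assms(1,2)] assms(3) by (simp add: piv_def mem_Sall_iff)

lemma piv_eq_parent_vertex: "snd v = Suc n \<Longrightarrow> piv rho par v = rho v * piv rho par (parent_vertex par v)"
  by (cases v) (simp add: piv_def parent_vertex_def)

lemma Desc_Suc_eq:
  assumes "u \<in> Sv Xs k"
  shows "Desc Xs par (Suc k) u = {v. v \<in> Sv Xs (Suc k) \<and> parent_vertex par v = u}"
proof -
  have "anc par y (Suc k) k = par y (Suc k)" for y by (cases k) auto
  then show ?thesis using assms by (auto simp: Desc_def parent_vertex_def mem_Sv_iff prod_eq_iff)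
qed

lemma D2_one_same_level_iff:
  assumes "u \<in> Sv Xs n" "u' \<in> Sv Xs n"
  shows "D2_one a lam Xs par u u' \<longleftrightarrow> u \<noteq> u' \<and>
    (\<exists>z. dist (fst u) z < lam * a powr - real n \<and> dist (fst u') z < lam * a powr - real n)"
  using assms by (cases u, cases u') (auto simp: D2_one_def fill_edge_def is_parent_def Sv_def Sall_def)

lemma powr_minus_Suc: "0 < a \<Longrightarrow> a powr - real (Suc n) = a powr - real n / a"
  by (simp add: powr_diff powr_minus_divide)

lemma D2_one_parent_dist:
  assumes filling: "hyp_filling a lam Xs x0 par" and "0 < a"
    and w: "w \<in> Sv Xs (Suc k)" and v: "v \<in> Sv Xs (Suc k)" and "D2_one a lam Xs par w v"
  shows "dist (fst (parent_vertex par w)) (fst v) < (1 + 2 * lam / a) * a powr - real k"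
proof -
  obtain z where z: "dist (fst w) z < lam / a * a powr - real k" "dist (fst v) z < lam / a * a powr - real k"
    using assms(5) D2_one_same_level_iff[OF w v] powr_minus_Suc[OF \<open>0 < a\<close>] by auto
  have "dist (fst (parent_vertex par w)) (fst w) < a powr - real k"
    using hyp_filling_dist_parent[OF filling \<open>0 < a\<close>] w
    by (simp add: parent_vertex_def mem_Sv_iff dist_commute)
  moreover have "dist (fst (parent_vertex par w)) (fst v)
      \<le> dist (fst (parent_vertex par w)) (fst w) + dist (fst w) z + dist z (fst v)"
    using dist_triangle[of "fst (parent_vertex par w)" "fst v" "fst w"]
      dist_triangle[of "fst w" "fst v" z] by linarith
  moreover have "(1 + 2 * lam / a) * a powr - real k
      = a powr - real k + lam / a * a powr - real k + lam / a * a powr - real k"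
    by (simp add: algebra_simps)
  ultimately show ?thesis using z dist_commute[of z "fst v"] by linarith
qed

lemma D2_one_parents_dist:
  assumes filling: "hyp_filling a lam Xs x0 par" and "4 \<le> lam" "lam \<le> a"
    and v: "v \<in> Sv Xs (Suc k)" and v': "v' \<in> Sv Xs (Suc k)" and "D2_one a lam Xs par v v'"
  shows "dist (fst (parent_vertex par v)) (fst (parent_vertex par v')) < lam * a powr - real k"
proof -
  have "0 < a" using assms(2,3) by simp
  have "dist (fst (parent_vertex par v)) (fst v') < (1 + 2 * lam / a) * a powr - real k"
    by (rule D2_one_parent_dist[OF filling \<open>0 < a\<close> v v' assms(6)])
  also have "\<dots> \<le> 3 * a powr - real k"
    using assms(3) \<open>0 < a\<close> by (intro mult_right_mono) (auto simp: field_simps)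
  finally have "dist (fst (parent_vertex par v)) (fst v') < 3 * a powr - real k" .
  moreover have "dist (fst v') (fst (parent_vertex par v')) < a powr - real k"
    using hyp_filling_dist_parent[OF filling \<open>0 < a\<close>] v' by (simp add: parent_vertex_def mem_Sv_iff)
  moreover have "4 * a powr - real k \<le> lam * a powr - real k"
    using assms(2) by (intro mult_right_mono) auto
  ultimately show ?thesis
    using dist_triangle[of "fst (parent_vertex par v)" "fst (parent_vertex par v')" "fst v'"] by linarith
qed

lemma piv_powr_parent_le:
  assumes filling: "hyp_filling a lam Xs x0 par" and "0 \<le> p" "0 < eta"
    and rho_ge: "\<And>v. v \<in> Sall Xs \<Longrightarrow> eta \<le> rho v" and C_ge: "eta powr - p \<le> C"
    and v: "v \<in> Sv Xs (Suc k)"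
  shows "piv rho par (parent_vertex par v) powr p \<le> C * piv rho par v powr p"
proof -
  have v_Sall: "v \<in> Sall Xs" using v Sv_subset_Sall by blast
  have "parent_vertex par v \<in> Sall Xs"
    using hyp_filling_closest_parent(1)[OF filling] v by (simp add: parent_vertex_def mem_Sv_iff mem_Sall_iff)
  then have parent_pos: "0 < piv rho par (parent_vertex par v)"
    using piv_pos[OF filling] rho_ge \<open>0 < eta\<close> by (meson order_less_le_trans)
  have "1 \<le> C * eta powr p"
    using C_ge \<open>0 < eta\<close> by (simp add: powr_minus field_simps)
  also have "\<dots> \<le> C * rho v powr p"
    using rho_ge[OF v_Sall] assms(2,3) C_ge
    by (intro mult_left_mono powr_mono2) (auto intro: order_trans[OF _ C_ge])
  finally have "piv rho par (parent_vertex par v) powr p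
      \<le> C * rho v powr p * piv rho par (parent_vertex par v) powr p"
    using parent_pos by simp
  also have "\<dots> = C * piv rho par v powr p"
    using piv_eq_parent_vertex[of v k rho par] v rho_ge[OF v_Sall] \<open>0 < eta\<close> parent_pos
    by (simp add: mem_Sv_iff powr_mult)
  finally show ?thesis .
qed

lemma hyp_filling_mass_refinement:
  fixes Xs :: "nat \<Rightarrow> 'a::metric_space set"
  assumes compact: "compact (UNIV :: 'a set)" and filling: "hyp_filling a lam Xs x0 par"
    and lam: "4 \<le> lam" "lam \<le> a" and "0 \<le> p" "0 < eta"
    and rho_ge: "\<And>v. v \<in> Sall Xs \<Longrightarrow> eta \<le> rho v"
    and H4: "\<And>u. u \<in> Sv Xs k \<Longrightarrow>
      (\<Sum>w\<in>Desc Xs par (Suc k) u. piv rho par w powr p) \<le> piv rho par u powr p"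
    and C_ge: "eta powr - p \<le> C" and bal: "balanced a lam Xs par rho p C k mu"
  shows "mass_refinement (Sv Xs k) (Sv Xs (Suc k)) (parent_vertex par) (\<lambda>v. piv rho par v powr p) mu C
    (lam * a powr - real k) (D2_one a lam Xs par) fst"
proof
  have "0 < a" using lam by simp
  show "finite (Sv Xs k)" "finite (Sv Xs (Suc k))"
    using hyp_filling_finite[OF compact filling \<open>0 < a\<close>] by (simp_all add: finite_Sv)
  show parent_in: "parent_vertex par v \<in> Sv Xs k" if "v \<in> Sv Xs (Suc k)" for v
    using hyp_filling_closest_parent(1)[OF filling] that by (simp add: parent_vertex_def mem_Sv_iff)
  have piv_pos': "0 < piv rho par v" if "v \<in> Sall Xs" for v
    using piv_pos[OF filling _ that] rho_ge \<open>0 < eta\<close> by (meson order_less_le_trans)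
  show "0 < piv rho par u powr p" if "u \<in> Sv Xs k" for u
    using piv_pos'[OF subsetD[OF Sv_subset_Sall that]] by simp
  show "0 < piv rho par v powr p" if "v \<in> Sv Xs (Suc k)" for v
    using piv_pos'[OF subsetD[OF Sv_subset_Sall that]] by simp
  show "0 < mu u" if "u \<in> Sv Xs k" for u
    using bal that by (simp add: balanced_def)
  show "(\<Sum>v | v \<in> Sv Xs (Suc k) \<and> parent_vertex par v = u. piv rho par v powr p) \<le> piv rho par u powr p"
    if "u \<in> Sv Xs k" for u
    using H4[OF that] by (simp add: Desc_Suc_eq[OF that])
  show "piv rho par u powr p \<le> C * (\<Sum>v | v \<in> Sv Xs (Suc k) \<and> parent_vertex par v = u. piv rho par v powr p)"
    if u: "u \<in> Sv Xs k" for u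
  proof -
    define c where "c = (fst u, Suc k)"
    have c: "c \<in> Sv Xs (Suc k)" "parent_vertex par c = u"
      using hyp_filling_parent_self[OF filling] u by (auto simp: c_def parent_vertex_def mem_Sv_iff)
    have "0 \<le> C" using C_ge by (smt (verit) powr_ge_zero)
    have "piv rho par c powr p \<le> (\<Sum>v | v \<in> Sv Xs (Suc k) \<and> parent_vertex par v = u. piv rho par v powr p)"
      using c finite_Sv[OF hyp_filling_finite[OF compact filling \<open>0 < a\<close>]]
      by (intro member_le_sum) auto
    then show ?thesis
      using piv_powr_parent_le[where rho = rho, OF filling \<open>0 \<le> p\<close> \<open>0 < eta\<close> rho_ge C_ge c(1)]
        c(2) \<open>0 \<le> C\<close>
      by (smt (verit) mult_left_mono)
  qed
  show "dist (fst (parent_vertex par v)) (fst (parent_vertex par v')) < lam * a powr - real k"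
    if "v \<in> Sv Xs (Suc k)" "v' \<in> Sv Xs (Suc k)" "D2_one a lam Xs par v v'" for v v'
    by (rule D2_one_parents_dist[OF filling lam that])
  show "mu u / piv rho par u powr p \<le> C\<^sup>2 * mu u' / piv rho par u' powr p"
    if "u \<in> Sv Xs k" "u' \<in> Sv Xs k" "u \<noteq> u'"
      "dist (fst u) z < lam * a powr - real k" "dist (fst u') z < lam * a powr - real k" for u u' z
    using bal that D2_one_same_level_iff[OF that(1,2)] unfolding balanced_def by blast
qed

lemma parent_or_D2_neighbour_dist:
  assumes filling: "hyp_filling a lam Xs x0 par" and "0 < a" "0 \<le> lam" and v: "v \<in> Sv Xs (Suc k)"
    and "parent_vertex par v = u \<or> (\<exists>w\<in>Sv Xs (Suc k). parent_vertex par w = u \<and> D2_one a lam Xs par w v)"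
  shows "dist (fst u) (fst v) < (1 + 2 * lam / a) * a powr - real k"
  using assms(5)
proof
  assume "parent_vertex par v = u"
  then have "dist (fst u) (fst v) < a powr - real k"
    using hyp_filling_dist_parent[OF filling \<open>0 < a\<close>] v by (auto simp: parent_vertex_def mem_Sv_iff dist_commute)
  also have "\<dots> \<le> (1 + 2 * lam / a) * a powr - real k"
    using assms(2,3) by simp
  finally show ?thesis .
qed (use D2_one_parent_dist[OF filling \<open>0 < a\<close> _ v] in blast)

theorem lemma3p11:
  fixes a lam p C eta_minus eta_plus :: real
    and Xs :: "nat \<Rightarrow> 'a::metric_space set" and x0 :: 'a
    and par :: "'a \<Rightarrow> nat \<Rightarrow> 'a"
    and rho :: "'a \<times> nat \<Rightarrow> real"
    and k :: nat and mu_k :: "'a \<times> nat \<Rightarrow> real"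
  assumes compact_X: "compact (UNIV :: 'a set)"
    and doubling_X: "doubling TYPE('a)"
    and diam_X: "diameter (UNIV :: 'a set) = 1/2"
    and params: "lam \<ge> 6" "a \<ge> lam"
    and filling: "hyp_filling a lam Xs x0 par"
    and p_pos: "p > 0"
    and H1: "0 < eta_minus" "eta_minus \<le> eta_plus" "eta_plus < 1"
            "\<forall>v\<in>Sall Xs. eta_minus \<le> rho v \<and> rho v \<le> eta_plus"
    and H4: "\<forall>m n v. v \<in> Sv Xs m \<longrightarrow> n > m \<longrightarrow>
               (\<Sum>w\<in>Desc Xs par n v. piv rho par w powr p) \<le> piv rho par v powr p"
    and C_ge: "C \<ge> eta_minus powr (- p)"
    and mu_pmf: "pmf_on mu_k (Sv Xs k)"
    and mu_bal: "balanced a lam Xs par rho p C k mu_k"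
  shows "\<exists>mu_k1 :: 'a \<times> nat \<Rightarrow> real.
           pmf_on mu_k1 (Sv Xs (Suc k)) \<and>
           compatible Xs par rho p C k mu_k mu_k1 \<and>
           balanced a lam Xs par rho p C (Suc k) mu_k1 \<and>
           (\<exists>M :: ('a \<times> 'a) measure.
              prob_space M \<and> sets M = sets borel \<and>
              (\<forall>A \<in> sets borel. measure M (fst -` A \<inter> space M)
                   = (\<Sum>u\<in>Sv Xs k. mu_k u * indicator A (fst u))) \<and>
              (\<forall>A \<in> sets borel. measure M (snd -` A \<inter> space M)
                   = (\<Sum>v\<in>Sv Xs (Suc k). mu_k1 v * indicator A (fst v))) \<and>
              measure M {z. dist (fst z) (snd z) \<ge> (1 + 2 * lam / a) * a powr (- real k)} = 0)"
proof -
  have lam: "4 \<le> lam" "lam \<le> a" and "0 < a" using params by simp_all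
  interpret mass_refinement "Sv Xs k" "Sv Xs (Suc k)" "parent_vertex par" "\<lambda>v. piv rho par v powr p"
    mu_k C "lam * a powr - real k" "D2_one a lam Xs par" fst
    using H1(4) H4 by (intro hyp_filling_mass_refinement[OF compact_X filling lam _ H1(1) _ _ C_ge mu_bal])
      (use p_pos in auto)
  obtain mu1 T where plan: "transport_plan (Sv Xs k) (Sv Xs (Suc k)) T mu_k mu1"
    and support: "\<And>u v. u \<in> Sv Xs k \<Longrightarrow> v \<in> Sv Xs (Suc k) \<Longrightarrow> T u v \<noteq> 0 \<Longrightarrow>
      parent_vertex par v = u \<or> (\<exists>w\<in>Sv Xs (Suc k). parent_vertex par w = u \<and> D2_one a lam Xs par w v)"
    and mu1_pos: "\<And>v. v \<in> Sv Xs (Suc k) \<Longrightarrow> 0 < mu1 v"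
    and mu1_compatible: "\<And>v. v \<in> Sv Xs (Suc k) \<Longrightarrow>
      mu_k (parent_vertex par v) / piv rho par (parent_vertex par v) powr p \<le> mu1 v / piv rho par v powr p \<and>
      mu1 v / piv rho par v powr p \<le> C * mu_k (parent_vertex par v) / piv rho par (parent_vertex par v) powr p"
    and mu1_balanced: "\<And>v v'. v \<in> Sv Xs (Suc k) \<Longrightarrow> v' \<in> Sv Xs (Suc k) \<Longrightarrow> D2_one a lam Xs par v v' \<Longrightarrow>
      mu1 v / piv rho par v powr p \<le> C\<^sup>2 * mu1 v' / piv rho par v' powr p"
    by (rule refinement_exists) (rule that)
  have far: "{z. (1 + 2 * lam / a) * a powr - real k \<le> dist (fst z) (snd z)} \<in> sets borel"
    by (intro borel_closed closed_Collect_le continuous_intros)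
  have "pmf_on mu1 (Sv Xs (Suc k))"
    by (rule transport_plan_pmf_on[OF finite_V plan mu_pmf])
  moreover have "compatible Xs par rho p C k mu_k mu1"
    using mu1_compatible by (auto simp: compatible_def is_parent_def parent_vertex_def)
  moreover have "balanced a lam Xs par rho p C (Suc k) mu1"
    using mu1_pos mu1_balanced by (simp add: balanced_def)
  moreover have "\<exists>M. prob_space M \<and> sets M = sets borel \<and>
      (\<forall>A\<in>sets borel. measure M (fst -` A \<inter> space M) = (\<Sum>u\<in>Sv Xs k. mu_k u * indicator A (fst u))) \<and>
      (\<forall>A\<in>sets borel. measure M (snd -` A \<inter> space M) = (\<Sum>v\<in>Sv Xs (Suc k). mu1 v * indicator A (fst v))) \<and>
      measure M {z. (1 + 2 * lam / a) * a powr - real k \<le> dist (fst z) (snd z)} = 0"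
    using parent_or_D2_neighbour_dist[OF filling \<open>0 < a\<close> _ _ support] lam mu_pmf
    by (intro finite_coupling_exists[OF finite_U finite_V plan _ far])
      (auto simp: pmf_on_def not_le[symmetric])
  ultimately show ?thesis by blast
qed

end
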